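(* Every solid branchwise implicative weak BCC-algebra is branchwise commutative.
   Context: A weak BCC-algebra is a set $X$ with a binary operation $*$ and a constant $0$ satisfying, for all $x,y,z\in X$: (i) $((x*y)*(z*y))*(x*z)=0$; (ii) $x*x=0$; (iii) $x*0=x$; (iv) $x*y=y*x=0$ implies $x=y$. The relation $x\leqslant y$ iff $x*y=0$ is a partial order on $X$. Let $I(X)$ be the set of minimal elements of $X$ with respect to $\leqslant$. For $a\in I(X)$ the branch initiated by $a$ is $B(a)=\{x\in X: a\leqslant x\}$; "belonging to the same branch" means lying in a common $B(a)$. A weak BCC-algebra is called (left) solid if $(x*y)*z=(x*z)*y$ holds for all $x,y$ belonging to the same branch and all $z\in X$. It is branchwise implicative if $x*(y*x)=x$ for all $x,y$ belonging to the same branch, and branchwise commutative if $x*(x*y)=y*(y*x)$ for all $x,y$ belonging to the same branch. *)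

theory Defs
  imports Main
begin

definition weak_BCC :: "'a set \<Rightarrow> ('a \<Rightarrow> 'a \<Rightarrow> 'a) \<Rightarrow> 'a \<Rightarrow> bool" where
  "weak_BCC X m z \<longleftrightarrow>
     z \<in> X \<and> (\<forall>x\<in>X. \<forall>y\<in>X. m x y \<in> X) \<and>
     (\<forall>x\<in>X. \<forall>y\<in>X. \<forall>w\<in>X. m (m (m x y) (m w y)) (m x w) = z) \<and>
     (\<forall>x\<in>X. m x x = z) \<and>
     (\<forall>x\<in>X. m x z = x) \<and>
     (\<forall>x\<in>X. \<forall>y\<in>X. m x y = z \<and> m y x = z \<longrightarrow> x = y)"

definition bcc_le :: "('a \<Rightarrow> 'a \<Rightarrow> 'a) \<Rightarrow> 'a \<Rightarrow> 'a \<Rightarrow> 'a \<Rightarrow> bool" where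
  "bcc_le m z x y \<longleftrightarrow> m x y = z"

definition minimal_elems :: "'a set \<Rightarrow> ('a \<Rightarrow> 'a \<Rightarrow> 'a) \<Rightarrow> 'a \<Rightarrow> 'a set" where
  "minimal_elems X m z = {a \<in> X. \<forall>x\<in>X. bcc_le m z x a \<longrightarrow> x = a}"

definition branch :: "'a set \<Rightarrow> ('a \<Rightarrow> 'a \<Rightarrow> 'a) \<Rightarrow> 'a \<Rightarrow> 'a \<Rightarrow> 'a set" where
  "branch X m z a = {x \<in> X. bcc_le m z a x}"

definition same_branch :: "'a set \<Rightarrow> ('a \<Rightarrow> 'a \<Rightarrow> 'a) \<Rightarrow> 'a \<Rightarrow> 'a \<Rightarrow> 'a \<Rightarrow> bool" where
  "same_branch X m z x y \<longleftrightarrow>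
     (\<exists>a\<in>minimal_elems X m z. x \<in> branch X m z a \<and> y \<in> branch X m z a)"

definition solid :: "'a set \<Rightarrow> ('a \<Rightarrow> 'a \<Rightarrow> 'a) \<Rightarrow> 'a \<Rightarrow> bool" where
  "solid X m z \<longleftrightarrow> (\<forall>x\<in>X. \<forall>y\<in>X. \<forall>w\<in>X.
      same_branch X m z x y \<longrightarrow> m (m x y) w = m (m x w) y)"

definition branchwise_implicative :: "'a set \<Rightarrow> ('a \<Rightarrow> 'a \<Rightarrow> 'a) \<Rightarrow> 'a \<Rightarrow> bool" where
  "branchwise_implicative X m z \<longleftrightarrow> (\<forall>x\<in>X. \<forall>y\<in>X.
      same_branch X m z x y \<longrightarrow> m x (m y x) = x)"

definition branchwise_commutative :: "'a set \<Rightarrow> ('a \<Rightarrow> 'a \<Rightarrow> 'a) \<Rightarrow> 'a \<Rightarrow> bool" where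
  "branchwise_commutative X m z \<longleftrightarrow> (\<forall>x\<in>X. \<forall>y\<in>X.
      same_branch X m z x y \<longrightarrow> m x (m x y) = m y (m y x))"

end

theory Submission
  imports Defs
begin

text \<open>Write \<open>u = x \<star> (x \<star> y)\<close> and \<open>v = y \<star> (y \<star> x)\<close> for \<open>x, y\<close> in a branch \<open>B(a)\<close>.
  Solidity gives \<open>u \<le> x\<close> and \<open>u \<le> y\<close>; together with implicativity it shows that every
  \<open>p \<le> q\<close> in a common branch satisfies \<open>p = q \<star> (q \<star> p)\<close>. Applied to \<open>a \<le> x\<close> and to
  \<open>u \<le> y\<close>, and combined with the monotonicity of \<open>w \<star> (w \<star> _)\<close>, this yields first
  \<open>u \<in> B(a)\<close> and then \<open>u = y \<star> (y \<star> u) \<le> y \<star> (y \<star> x) = v\<close>. By symmetry \<open>v \<le> u\<close>.\<close>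

locale weak_bcc_algebra =
  fixes X :: "'a set" and m :: "'a \<Rightarrow> 'a \<Rightarrow> 'a" (infixl "\<star>" 70) and z :: 'a
  assumes weak_BCC: "weak_BCC X m z"
begin

lemma zero_mem: "z \<in> X"
  and op_closed: "x \<in> X \<Longrightarrow> y \<in> X \<Longrightarrow> x \<star> y \<in> X"
  and bcc_axiom: "x \<in> X \<Longrightarrow> y \<in> X \<Longrightarrow> w \<in> X \<Longrightarrow> ((x \<star> y) \<star> (w \<star> y)) \<star> (x \<star> w) = z"
  and self_op: "x \<in> X \<Longrightarrow> x \<star> x = z"
  and op_zero: "x \<in> X \<Longrightarrow> x \<star> z = x"
  and antisym: "x \<in> X \<Longrightarrow> y \<in> X \<Longrightarrow> x \<star> y = z \<Longrightarrow> y \<star> x = z \<Longrightarrow> x = y"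
  using weak_BCC unfolding weak_BCC_def by blast+

lemma op_antitone_right:
  assumes "p \<in> X" "q \<in> X" "w \<in> X" "p \<star> q = z"
  shows "(w \<star> q) \<star> (w \<star> p) = z"
  using bcc_axiom[of w q p] assms by (simp add: op_zero op_closed)

lemma double_op_mono:
  assumes "p \<in> X" "q \<in> X" "w \<in> X" "p \<star> q = z"
  shows "(w \<star> (w \<star> p)) \<star> (w \<star> (w \<star> q)) = z"
  using assms by (intro op_antitone_right op_antitone_right) (simp_all add: op_closed)

lemma same_branch_mem: "same_branch X m z x y \<Longrightarrow> x \<in> X \<and> y \<in> X"
  unfolding same_branch_def branch_def by blast

lemma same_branch_sym: "same_branch X m z x y \<Longrightarrow> same_branch X m z y x"
  unfolding same_branch_def by blast

lemma same_branch_refl: "same_branch X m z x y \<Longrightarrow> same_branch X m z x x"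
  unfolding same_branch_def by blast

lemma minimal_mem_branch:
  assumes "a \<in> minimal_elems X m z"
  shows "a \<in> branch X m z a"
  using assms self_op unfolding minimal_elems_def branch_def bcc_le_def by blast

lemma same_branchI:
  "a \<in> minimal_elems X m z \<Longrightarrow> x \<in> branch X m z a \<Longrightarrow> y \<in> branch X m z a \<Longrightarrow>
    same_branch X m z x y"
  unfolding same_branch_def by blast

text \<open>In a proper weak BCC-algebra \<open>z \<star> x\<close> need not be \<open>z\<close>; it is, though, for differences
  of elements of one branch, since \<open>(a \<star> y) \<star> (x \<star> y) \<le> a \<star> x\<close>.\<close>
lemma zero_op_same_branch:
  assumes "same_branch X m z x y"
  shows "z \<star> (x \<star> y) = z"
proof -
  obtain a where "a \<in> X" "x \<in> X" "y \<in> X" "a \<star> x = z" "a \<star> y = z"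
    using assms unfolding same_branch_def branch_def bcc_le_def minimal_elems_def by blast
  then show ?thesis
    using bcc_axiom[of a y x] by (simp add: op_zero op_closed zero_mem)
qed

end

locale solid_weak_bcc_algebra = weak_bcc_algebra +
  assumes solid: "solid X m z"
begin

lemma solid_swap:
  assumes "same_branch X m z x y" "w \<in> X"
  shows "(x \<star> y) \<star> w = (x \<star> w) \<star> y"
  using solid assms same_branch_mem unfolding solid_def by blast

lemma double_op_below_right:
  assumes "same_branch X m z x y"
  shows "(x \<star> (x \<star> y)) \<star> y = z"
proof -
  have "x \<in> X" "y \<in> X" using same_branch_mem[OF assms] by auto
  then have "(x \<star> (x \<star> y)) \<star> y = (x \<star> y) \<star> (x \<star> y)"
    using solid_swap[OF assms, of "x \<star> y"] by (simp add: op_closed)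
  then show ?thesis using \<open>x \<in> X\<close> \<open>y \<in> X\<close> by (simp add: self_op op_closed)
qed

lemma double_op_below_left:
  assumes "same_branch X m z x y"
  shows "(x \<star> (x \<star> y)) \<star> x = z"
proof -
  have "x \<in> X" "y \<in> X" using same_branch_mem[OF assms] by auto
  then have "(x \<star> (x \<star> y)) \<star> x = (x \<star> x) \<star> (x \<star> y)"
    using solid_swap[OF same_branch_refl[OF assms], of "x \<star> y"] by (simp add: op_closed)
  then show ?thesis
    using \<open>x \<in> X\<close> zero_op_same_branch[OF assms] by (simp add: self_op)
qed

end

locale solid_implicative_weak_bcc_algebra = solid_weak_bcc_algebra +
  assumes implicative: "branchwise_implicative X m z"
begin

lemma implicative_branch:
  "same_branch X m z x y \<Longrightarrow> x \<star> (y \<star> x) = x"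
  using implicative same_branch_mem unfolding branchwise_implicative_def by blast

lemma below_eq_double_op:
  assumes "p \<star> q = z" "same_branch X m z p q"
  shows "p = q \<star> (q \<star> p)"
proof (rule antisym)
  have X: "p \<in> X" "q \<in> X" using same_branch_mem[OF assms(2)] by auto
  then show "p \<in> X" "q \<star> (q \<star> p) \<in> X" by (simp_all add: op_closed)
  show "q \<star> (q \<star> p) \<star> p = z"
    using double_op_below_right[OF same_branch_sym[OF assms(2)]] .
  have "((p \<star> (q \<star> p)) \<star> (q \<star> (q \<star> p))) \<star> (p \<star> q) = z"
    using bcc_axiom[of p "q \<star> p" q] X by (simp add: op_closed)
  then show "p \<star> (q \<star> (q \<star> p)) = z"
    using assms X by (simp add: implicative_branch op_zero op_closed)
qed

lemma double_op_mem_branch: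
  assumes a: "a \<in> minimal_elems X m z" and x: "x \<in> branch X m z a" and y: "y \<in> branch X m z a"
  shows "x \<star> (x \<star> y) \<in> branch X m z a"
proof -
  have X: "a \<in> X" "x \<in> X" "y \<in> X" "a \<star> x = z" "a \<star> y = z"
    using assms unfolding minimal_elems_def branch_def bcc_le_def by auto
  have "a = x \<star> (x \<star> a)"
    using below_eq_double_op[OF \<open>a \<star> x = z\<close> same_branchI[OF a minimal_mem_branch[OF a] x]] .
  moreover have "(x \<star> (x \<star> a)) \<star> (x \<star> (x \<star> y)) = z"
    using double_op_mono[of a y x] X by simp
  ultimately show ?thesis
    using X unfolding branch_def bcc_le_def by (simp add: op_closed)
qed

lemma double_op_below_double_op:
  assumes "same_branch X m z x y"
  shows "(x \<star> (x \<star> y)) \<star> (y \<star> (y \<star> x)) = z"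
proof -
  define u where "u = x \<star> (x \<star> y)"
  obtain a where a: "a \<in> minimal_elems X m z" "x \<in> branch X m z a" "y \<in> branch X m z a"
    using assms unfolding same_branch_def by blast
  have X: "x \<in> X" "y \<in> X" "u \<in> X"
    using same_branch_mem[OF assms] unfolding u_def by (auto simp: op_closed)
  have "same_branch X m z u y"
    using same_branchI[OF a(1) double_op_mem_branch[OF a] a(3)] unfolding u_def .
  then have "u = y \<star> (y \<star> u)"
    using below_eq_double_op double_op_below_right[OF assms] unfolding u_def by blast
  moreover have "(y \<star> (y \<star> u)) \<star> (y \<star> (y \<star> x)) = z"
    using double_op_mono[of u x y] X double_op_below_left[OF assms] unfolding u_def by blast
  ultimately show ?thesis unfolding u_def by simp
qed

theorem branchwise_commutative: "branchwise_commutative X m z"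
  unfolding branchwise_commutative_def
  by (metis antisym op_closed same_branch_sym double_op_below_double_op)

end

theorem theorem3p8:
  fixes X :: "'a set" and m :: "'a \<Rightarrow> 'a \<Rightarrow> 'a" and z :: 'a
  assumes "weak_BCC X m z"
    and "solid X m z"
    and "branchwise_implicative X m z"
  shows "branchwise_commutative X m z"
proof -
  interpret solid_implicative_weak_bcc_algebra X m z
    using assms by unfold_locales
  show ?thesis by (rule branchwise_commutative)
qed

end
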